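(* Let $L$ be a finite lattice which is a subdirect product $L\subseteq\prod_{i=1}^t L_i$ of finite subdirectly irreducible lattices. Regard $G(L)$ as a partial join-semilattice, and for $x\in L$ put $\varepsilon(x):=\{a\in G(L):\ a\le x\}$. Then $\varepsilon$ is an isomorphism from $L$ onto the set of all $\bigvee$-ideals of $(G(L),\bigvee)$ ordered by inclusion; in particular $L\setminus\{0\}$ is isomorphic to the join-semilattice of nonempty $\bigvee$-ideals, i.e. $F_\vee(G(L),\bigvee)\cong L\setminus\{0\}$.
   Context: $\pi_i:L\to L_i$ is the surjective restricted projection, $\sigma_i(y):=\bigwedge\{x\in L:\pi_i(x)=y\}$ its smallest pre-image map, and $G(L):=\bigcup_{i=1}^t\sigma_i(L_i\setminus\{0\})$ (the scaffolding). The partial join on $G(L)$: for $B\subseteq G(L)$, $\bigvee B$ (computed in $L$) is defined in $(G(L),\bigvee)$ iff it lies in $G(L)$. A subset $A\subseteq G(L)$ is a $\bigvee$-ideal if it is hereditary ($a\in A$, $b\in G(L)$, $b\le a$ imply $b\in A$) and closed under the defined partial joins ($B\subseteq A$ and $\bigvee B\in G(L)$ imply $\bigvee B\in A$). $F_\vee(G(L),\bigvee)$ denotes the join-semilattice of nonempty $\bigvee$-ideals under inclusion. *)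

theory Defs
  imports "HOL-Algebra.Lattice"
begin

text \<open>Lattices are HOL-Algebra lattices (records of type gorder, with eq being
  equality).  Congruences of a lattice K: equivalence relations on the carrier
  compatible with binary joins and meets.\<close>

definition lat_congruence :: "('a, 'b) gorder_scheme \<Rightarrow> ('a \<times> 'a) set \<Rightarrow> bool" where
  "lat_congruence K \<theta> \<longleftrightarrow> equiv (carrier K) \<theta> \<and>
     (\<forall>a b c d. (a, b) \<in> \<theta> \<longrightarrow> (c, d) \<in> \<theta> \<longrightarrow>
        (a \<squnion>\<^bsub>K\<^esub> c, b \<squnion>\<^bsub>K\<^esub> d) \<in> \<theta> \<and> (a \<sqinter>\<^bsub>K\<^esub> c, b \<sqinter>\<^bsub>K\<^esub> d) \<in> \<theta>)"

definition subdirectly_irreducible :: "('a, 'b) gorder_scheme \<Rightarrow> bool" where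
  "subdirectly_irreducible K \<longleftrightarrow> lattice K \<and>
     (\<exists>x\<in>carrier K. \<exists>y\<in>carrier K. x \<noteq> y) \<and>
     (\<exists>\<mu>. lat_congruence K \<mu> \<and> \<mu> \<noteq> Id_on (carrier K) \<and>
        (\<forall>\<theta>. lat_congruence K \<theta> \<and> \<theta> \<noteq> Id_on (carrier K) \<longrightarrow> \<mu> \<subseteq> \<theta>))"

definition prod_ord :: "nat \<Rightarrow> (nat \<Rightarrow> 'a gorder) \<Rightarrow> (nat \<Rightarrow> 'a) set \<Rightarrow> (nat \<Rightarrow> 'a) gorder" where
  "prod_ord t Ls L = \<lparr> carrier = L, eq = (=),
      le = (\<lambda>x y. \<forall>i\<in>{1..t}. x i \<sqsubseteq>\<^bsub>Ls i\<^esub> y i) \<rparr>"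

definition subdirect_product :: "nat \<Rightarrow> (nat \<Rightarrow> 'a gorder) \<Rightarrow> (nat \<Rightarrow> 'a) set \<Rightarrow> bool" where
  "subdirect_product t Ls L \<longleftrightarrow>
     (\<forall>i\<in>{1..t}. lattice (Ls i)) \<and>
     L \<subseteq> (\<Pi>\<^sub>E i\<in>{1..t}. carrier (Ls i)) \<and> L \<noteq> {} \<and>
     (\<forall>x\<in>L. \<forall>y\<in>L.
        (\<lambda>i. if i \<in> {1..t} then x i \<squnion>\<^bsub>Ls i\<^esub> y i else undefined) \<in> L \<and>
        (\<lambda>i. if i \<in> {1..t} then x i \<sqinter>\<^bsub>Ls i\<^esub> y i else undefined) \<in> L) \<and>
     (\<forall>i\<in>{1..t}. (\<lambda>x. x i) ` L = carrier (Ls i))"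

definition sigma :: "nat \<Rightarrow> (nat \<Rightarrow> 'a gorder) \<Rightarrow> (nat \<Rightarrow> 'a) set \<Rightarrow> nat \<Rightarrow> 'a \<Rightarrow> (nat \<Rightarrow> 'a)" where
  "sigma t Ls L i y = \<Sqinter>\<^bsub>prod_ord t Ls L\<^esub> {x \<in> L. x i = y}"

definition scaffolding :: "nat \<Rightarrow> (nat \<Rightarrow> 'a gorder) \<Rightarrow> (nat \<Rightarrow> 'a) set \<Rightarrow> (nat \<Rightarrow> 'a) set" where
  "scaffolding t Ls L =
     (\<Union>i\<in>{1..t}. sigma t Ls L i ` (carrier (Ls i) - {\<bottom>\<^bsub>Ls i\<^esub>}))"

definition vee_ideal :: "nat \<Rightarrow> (nat \<Rightarrow> 'a gorder) \<Rightarrow> (nat \<Rightarrow> 'a) set \<Rightarrow> (nat \<Rightarrow> 'a) set \<Rightarrow> bool" where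
  "vee_ideal t Ls L A \<longleftrightarrow>
     A \<subseteq> scaffolding t Ls L \<and>
     (\<forall>a\<in>A. \<forall>b\<in>scaffolding t Ls L. b \<sqsubseteq>\<^bsub>prod_ord t Ls L\<^esub> a \<longrightarrow> b \<in> A) \<and>
     (\<forall>B. B \<subseteq> A \<longrightarrow> \<Squnion>\<^bsub>prod_ord t Ls L\<^esub> B \<in> scaffolding t Ls L \<longrightarrow>
          \<Squnion>\<^bsub>prod_ord t Ls L\<^esub> B \<in> A)"

definition epsilon :: "nat \<Rightarrow> (nat \<Rightarrow> 'a gorder) \<Rightarrow> (nat \<Rightarrow> 'a) set \<Rightarrow> (nat \<Rightarrow> 'a) \<Rightarrow> (nat \<Rightarrow> 'a) set" where
  "epsilon t Ls L x = {a \<in> scaffolding t Ls L. a \<sqsubseteq>\<^bsub>prod_ord t Ls L\<^esub> x}"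

end

theory Submission
  imports Defs
begin

text \<open>
  The proof rests on one observation: \<open>\<sigma>\<^sub>i\<close> is left adjoint to the \<open>i\<close>-th
  projection, \<open>\<sigma>\<^sub>i(y) \<le> x \<longleftrightarrow> y \<le> x\<^sub>i\<close>.  It follows that \<open>G(L)\<close> is join-dense
  (\<open>x = \<Squnion>\<epsilon>(x)\<close>), so \<open>\<epsilon>\<close> is an order embedding whose values are \<open>\<or>\<close>-ideals;
  conversely every \<open>\<or>\<close>-ideal \<open>A\<close> equals \<open>\<epsilon>(\<Squnion>A)\<close>, because \<open>\<sigma>\<^sub>i((\<Squnion>A)\<^sub>i)\<close> is
  itself a join of elements \<open>\<sigma>\<^sub>i(b\<^sub>i)\<close> of \<open>A\<close>, hence belongs to \<open>A\<close>.
\<close>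

lemma (in lattice) finite_lattice_bottom:
  assumes "finite (carrier L)" "carrier L \<noteq> {}"
  shows "least L \<bottom> (carrier L)"
proof -
  have "greatest L (\<Sqinter> (carrier L)) (Lower L (carrier L))"
    using assms by (intro finite_inf_greatest) auto
  hence "least L (\<Sqinter> (carrier L)) (carrier L)"
    unfolding greatest_def least_def Lower_def by auto
  thus ?thesis unfolding bottom_def by (rule someI)
qed

lemma (in lattice) finite_lattice_sup:
  assumes "finite (carrier L)" "carrier L \<noteq> {}" "F \<subseteq> carrier L"
  shows "least L (\<Squnion> F) (Upper L F)"
proof (cases "F = {}")
  case True
  have "least L \<bottom> (Upper L F)" using finite_lattice_bottom[OF assms(1,2)] True by simp
  thus ?thesis unfolding sup_def by (rule someI)
next
  case False
  show ?thesis using assms False finite_subset by (intro finite_sup_least) auto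
qed

lemma (in lattice) Upper_insert_sup:
  assumes s: "least L s (Upper L F)" and a: "a \<in> carrier L" and F: "F \<subseteq> carrier L"
  shows "Upper L (insert a F) = Upper L {a, s}"
proof (rule Set.set_eqI, rule iffI)
  fix y assume y: "y \<in> Upper L (insert a F)"
  have "y \<in> Upper L F" using Upper_antimono[OF subset_insertI] y by (rule subsetD)
  then have "s \<sqsubseteq> y" by (rule least_le[OF s])
  moreover have "a \<sqsubseteq> y" using Upper_memD[OF y] a F by simp
  ultimately have "z \<sqsubseteq> y" if "z \<in> {a, s}" for z using that by (cases "z = a") simp_all
  moreover have "y \<in> carrier L" using subsetD[OF Upper_closed y] .
  ultimately show "y \<in> Upper L {a, s}" by (rule Upper_memI)
next
  fix y assume y: "y \<in> Upper L {a, s}"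
  have yc: "y \<in> carrier L" using subsetD[OF Upper_closed y] .
  have sc: "s \<in> carrier L" using s by auto
  have ay: "a \<sqsubseteq> y" and sy: "s \<sqsubseteq> y" using Upper_memD[OF y] a sc by auto
  have "b \<sqsubseteq> y" if b: "b \<in> insert a F" for b
  proof (cases "b = a")
    case True then show ?thesis using ay by simp
  next
    case False
    then have bF: "b \<in> F" using b by simp
    have bs: "b \<sqsubseteq> s" by (rule least_Upper_above[OF s bF F])
    have "b \<in> carrier L" using bF F by blast
    then show ?thesis using le_trans[OF bs sy] yc sc by simp
  qed
  then show "y \<in> Upper L (insert a F)" using yc by (rule Upper_memI)
qed

lemma (in lattice) sup_insert:
  assumes "finite F" "F \<noteq> {}" "F \<subseteq> carrier L" "a \<in> carrier L"
  shows "\<Squnion> (insert a F) = a \<squnion> \<Squnion> F"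
  using Upper_insert_sup[OF finite_sup_least[OF assms(1,3,2)] assms(4,3)]
  unfolding join_def sup_def by simp

lemma (in lattice) join_closed_sup:
  assumes "finite F" "F \<noteq> {}" "F \<subseteq> C" "C \<subseteq> carrier L"
    and "\<And>x y. x \<in> C \<Longrightarrow> y \<in> C \<Longrightarrow> x \<squnion> y \<in> C"
  shows "\<Squnion> F \<in> C"
  using assms(1-3)
proof (induction F rule: finite_ne_induct)
  case (singleton x)
  then show ?case using assms(4) weak_sup_of_singleton[of x] by (auto simp: eq_is_equal)
next
  case (insert a F)
  then have "F \<subseteq> carrier L" "a \<in> carrier L" using assms(4) by auto
  then show ?case using insert assms(5) sup_insert[of F a] by auto
qed

lemma (in lattice) meet_closed_inf:
  assumes "finite F" "F \<noteq> {}" "F \<subseteq> C" "C \<subseteq> carrier L"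
    and "\<And>x y. x \<in> C \<Longrightarrow> y \<in> C \<Longrightarrow> x \<sqinter> y \<in> C"
  shows "\<Sqinter> F \<in> C"
  using lattice.join_closed_sup[OF dual_lattice, of F C] assms by simp

locale finite_subdirect_product =
  fixes t :: nat and Ls :: "nat \<Rightarrow> 'a gorder" and L :: "(nat \<Rightarrow> 'a) set"
  assumes subdirect: "subdirect_product t Ls L" and finite_L: "finite L"
begin

abbreviation P :: "(nat \<Rightarrow> 'a) gorder" where "P \<equiv> prod_ord t Ls L"

abbreviation sg :: "nat \<Rightarrow> 'a \<Rightarrow> nat \<Rightarrow> 'a" where "sg \<equiv> sigma t Ls L"

abbreviation cjoin :: "(nat \<Rightarrow> 'a) \<Rightarrow> (nat \<Rightarrow> 'a) \<Rightarrow> nat \<Rightarrow> 'a" where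
  "cjoin x y \<equiv> \<lambda>i. if i \<in> {1..t} then x i \<squnion>\<^bsub>Ls i\<^esub> y i else undefined"

abbreviation cmeet :: "(nat \<Rightarrow> 'a) \<Rightarrow> (nat \<Rightarrow> 'a) \<Rightarrow> nat \<Rightarrow> 'a" where
  "cmeet x y \<equiv> \<lambda>i. if i \<in> {1..t} then x i \<sqinter>\<^bsub>Ls i\<^esub> y i else undefined"

lemma factor_lattice: "i \<in> {1..t} \<Longrightarrow> lattice (Ls i)"
  using subdirect unfolding subdirect_product_def by auto

lemma cjoin_closed: "x \<in> L \<Longrightarrow> y \<in> L \<Longrightarrow> cjoin x y \<in> L"
  using subdirect unfolding subdirect_product_def by auto

lemma cmeet_closed: "x \<in> L \<Longrightarrow> y \<in> L \<Longrightarrow> cmeet x y \<in> L"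
  using subdirect unfolding subdirect_product_def by auto

lemma projection_onto: "i \<in> {1..t} \<Longrightarrow> (\<lambda>x. x i) ` L = carrier (Ls i)"
  using subdirect unfolding subdirect_product_def by auto

lemma component_closed: "x \<in> L \<Longrightarrow> i \<in> {1..t} \<Longrightarrow> x i \<in> carrier (Ls i)"
  using subdirect unfolding subdirect_product_def by (auto simp: PiE_def Pi_def)

lemma component_undefined: "x \<in> L \<Longrightarrow> i \<notin> {1..t} \<Longrightarrow> x i = undefined"
  using subdirect PiE_arb unfolding subdirect_product_def by blast

lemma carrier_P [simp]: "carrier P = L" and eq_P [simp]: "eq P = (=)"
  by (simp_all add: prod_ord_def)

lemma le_P: "x \<sqsubseteq>\<^bsub>P\<^esub> y \<longleftrightarrow> (\<forall>i\<in>{1..t}. x i \<sqsubseteq>\<^bsub>Ls i\<^esub> y i)"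
  by (simp add: prod_ord_def)

text \<open>The componentwise order on \<open>L\<close> is a partial order; antisymmetry uses
  that tuples in \<open>L\<close> are undefined outside \<open>{1..t}\<close>.\<close>

lemma partial_order_P: "partial_order P"
proof
  fix x assume x: "x \<in> carrier P"
  show "x \<sqsubseteq>\<^bsub>P\<^esub> x" unfolding le_P
  proof
    fix i assume i: "i \<in> {1..t}"
    interpret Li: lattice "Ls i" by (rule factor_lattice[OF i])
    show "x i \<sqsubseteq>\<^bsub>Ls i\<^esub> x i" using component_closed[OF _ i] x by simp
  qed
next
  fix x y assume xy: "x \<sqsubseteq>\<^bsub>P\<^esub> y" "y \<sqsubseteq>\<^bsub>P\<^esub> x" and c: "x \<in> carrier P" "y \<in> carrier P"
  have "x i = y i" for i
  proof (cases "i \<in> {1..t}")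
    case True
    interpret Li: lattice "Ls i" by (rule factor_lattice[OF True])
    show ?thesis
      by (rule Li.le_antisym)
        (use xy c True component_closed[OF _ True] in \<open>auto simp: le_P\<close>)
  next
    case False
    have xL: "x \<in> L" and yL: "y \<in> L" using c by simp_all
    show ?thesis using component_undefined[OF xL False] component_undefined[OF yL False] by simp
  qed
  then show "x .=\<^bsub>P\<^esub> y" by auto
next
  fix x y z assume xyz: "x \<sqsubseteq>\<^bsub>P\<^esub> y" "y \<sqsubseteq>\<^bsub>P\<^esub> z"
    and c: "x \<in> carrier P" "y \<in> carrier P" "z \<in> carrier P"
  show "x \<sqsubseteq>\<^bsub>P\<^esub> z" unfolding le_P
  proof
    fix i assume i: "i \<in> {1..t}"
    interpret Li: lattice "Ls i" by (rule factor_lattice[OF i])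
    show "x i \<sqsubseteq>\<^bsub>Ls i\<^esub> z i"
      by (rule Li.le_trans[of _ "y i"])
        (use xyz c i component_closed[OF _ i] in \<open>auto simp: le_P\<close>)
  qed
qed simp_all

lemma cjoin_least:
  assumes x: "x \<in> L" and y: "y \<in> L"
  shows "least P (cjoin x y) (Upper P {x, y})"
proof (rule least_UpperI)
  fix z assume z: "z \<in> {x, y}"
  show "z \<sqsubseteq>\<^bsub>P\<^esub> cjoin x y" unfolding le_P
  proof
    fix i assume i: "i \<in> {1..t}"
    interpret Li: lattice "Ls i" by (rule factor_lattice[OF i])
    show "z i \<sqsubseteq>\<^bsub>Ls i\<^esub> cjoin x y i"
      using z i component_closed[OF x i] component_closed[OF y i] Li.join_left Li.join_right
      by auto
  qed
next
  fix u assume u: "u \<in> Upper P {x, y}"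
  show "cjoin x y \<sqsubseteq>\<^bsub>P\<^esub> u" unfolding le_P
  proof
    fix i assume i: "i \<in> {1..t}"
    interpret Li: lattice "Ls i" by (rule factor_lattice[OF i])
    have "u \<in> L" "x \<sqsubseteq>\<^bsub>P\<^esub> u" "y \<sqsubseteq>\<^bsub>P\<^esub> u" using u x y by auto
    then show "cjoin x y i \<sqsubseteq>\<^bsub>Ls i\<^esub> u i"
      using i x y component_closed[OF _ i] by (auto simp: le_P intro: Li.join_le)
  qed
qed (use x y cjoin_closed in auto)

lemma cmeet_greatest:
  assumes x: "x \<in> L" and y: "y \<in> L"
  shows "greatest P (cmeet x y) (Lower P {x, y})"
proof (rule greatest_LowerI)
  fix z assume z: "z \<in> {x, y}"
  show "cmeet x y \<sqsubseteq>\<^bsub>P\<^esub> z" unfolding le_P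
  proof
    fix i assume i: "i \<in> {1..t}"
    interpret Li: lattice "Ls i" by (rule factor_lattice[OF i])
    show "cmeet x y i \<sqsubseteq>\<^bsub>Ls i\<^esub> z i"
      using z i component_closed[OF x i] component_closed[OF y i] Li.meet_left Li.meet_right
      by auto
  qed
next
  fix u assume u: "u \<in> Lower P {x, y}"
  show "u \<sqsubseteq>\<^bsub>P\<^esub> cmeet x y" unfolding le_P
  proof
    fix i assume i: "i \<in> {1..t}"
    interpret Li: lattice "Ls i" by (rule factor_lattice[OF i])
    have "u \<in> L" "u \<sqsubseteq>\<^bsub>P\<^esub> x" "u \<sqsubseteq>\<^bsub>P\<^esub> y" using u x y by auto
    then show "u i \<sqsubseteq>\<^bsub>Ls i\<^esub> cmeet x y i"
      using i x y component_closed[OF _ i] by (auto simp: le_P intro: Li.meet_le)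
  qed
qed (use x y cmeet_closed in auto)

lemma lattice_P: "lattice P"
proof -
  interpret partial_order P by (rule partial_order_P)
  show ?thesis
    by unfold_locales (auto intro: cjoin_least cmeet_greatest)
qed

lemma join_P:
  assumes x: "x \<in> L" and y: "y \<in> L" shows "x \<squnion>\<^bsub>P\<^esub> y = cjoin x y"
proof -
  interpret lattice P by (rule lattice_P)
  show ?thesis
  proof (rule joinI[where P = "\<lambda>l. l = cjoin x y"])
    fix l assume "least P l (Upper P {x, y})"
    then show "l = cjoin x y" using cjoin_least[OF x y] by (rule least_unique)
  qed (simp_all add: x y)
qed

lemma meet_P:
  assumes x: "x \<in> L" and y: "y \<in> L" shows "x \<sqinter>\<^bsub>P\<^esub> y = cmeet x y"
proof -
  interpret lattice P by (rule lattice_P)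
  show ?thesis
  proof (rule meetI[where P = "\<lambda>l. l = cmeet x y"])
    fix l assume "greatest P l (Lower P {x, y})"
    then show "l = cmeet x y" using cmeet_greatest[OF x y] by (rule greatest_unique)
  qed (simp_all add: x y)
qed

lemma L_nonempty: "L \<noteq> {}"
  using subdirect unfolding subdirect_product_def by auto

lemma factor_finite: "i \<in> {1..t} \<Longrightarrow> finite (carrier (Ls i))"
  using finite_imageI[OF finite_L, of "\<lambda>x. x i"] projection_onto[of i] by simp

lemma factor_nonempty: "i \<in> {1..t} \<Longrightarrow> carrier (Ls i) \<noteq> {}"
  using L_nonempty projection_onto[symmetric] by simp

lemma factor_bottom: "i \<in> {1..t} \<Longrightarrow> least (Ls i) \<bottom>\<^bsub>Ls i\<^esub> (carrier (Ls i))"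
  using lattice.finite_lattice_bottom[OF factor_lattice factor_finite factor_nonempty] .

lemma bottom_P: "least P \<bottom>\<^bsub>P\<^esub> L"
  using lattice.finite_lattice_bottom[OF lattice_P] finite_L L_nonempty by simp

lemma sup_P: "F \<subseteq> L \<Longrightarrow> least P (\<Squnion>\<^bsub>P\<^esub> F) (Upper P F)"
  using lattice.finite_lattice_sup[OF lattice_P] finite_L L_nonempty by simp

text \<open>The bottom of \<open>L\<close> is the tuple of bottoms: it lies below a preimage of
  each \<open>\<bottom>\<^bsub>Ls i\<^esub>\<close>, which exists by surjectivity of the projections.\<close>

lemma bottom_P_component:
  assumes i: "i \<in> {1..t}" shows "\<bottom>\<^bsub>P\<^esub> i = \<bottom>\<^bsub>Ls i\<^esub>"
proof -
  interpret Li: lattice "Ls i" by (rule factor_lattice[OF i])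
  have bot_i: "\<bottom>\<^bsub>Ls i\<^esub> \<in> carrier (Ls i)" using factor_bottom[OF i] by auto
  then have "\<bottom>\<^bsub>Ls i\<^esub> \<in> (\<lambda>x. x i) ` L" using projection_onto[OF i] by simp
  then obtain x where x: "x \<in> L" "x i = \<bottom>\<^bsub>Ls i\<^esub>" by (rule imageE) simp
  have bot: "\<bottom>\<^bsub>P\<^esub> \<in> L" using least_closed[OF bottom_P] by simp
  have "\<bottom>\<^bsub>P\<^esub> \<sqsubseteq>\<^bsub>P\<^esub> x" using bottom_P x(1) by (simp add: least_def)
  then have "\<bottom>\<^bsub>P\<^esub> i \<sqsubseteq>\<^bsub>Ls i\<^esub> x i" using i unfolding le_P by blast
  then have le: "\<bottom>\<^bsub>P\<^esub> i \<sqsubseteq>\<^bsub>Ls i\<^esub> \<bottom>\<^bsub>Ls i\<^esub>" using x(2) by simp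
  have ge: "\<bottom>\<^bsub>Ls i\<^esub> \<sqsubseteq>\<^bsub>Ls i\<^esub> \<bottom>\<^bsub>P\<^esub> i"
    using factor_bottom[OF i] component_closed[OF bot i] by (simp add: least_def)
  show ?thesis using Li.le_antisym[OF le ge component_closed[OF bot i] bot_i] .
qed

lemma below_factor_bottom:
  assumes i: "i \<in> {1..t}" and y: "y \<in> carrier (Ls i)" "y \<sqsubseteq>\<^bsub>Ls i\<^esub> \<bottom>\<^bsub>Ls i\<^esub>"
  shows "y = \<bottom>\<^bsub>Ls i\<^esub>"
proof -
  interpret Li: lattice "Ls i" by (rule factor_lattice[OF i])
  have bot_i: "\<bottom>\<^bsub>Ls i\<^esub> \<in> carrier (Ls i)" and "\<bottom>\<^bsub>Ls i\<^esub> \<sqsubseteq>\<^bsub>Ls i\<^esub> y"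
    using factor_bottom[OF i] y(1) by (auto simp: least_def)
  then show ?thesis using Li.le_antisym[OF y(2) _ y(1) bot_i] by simp
qed

text \<open>The fibre of \<open>y\<close> under the \<open>i\<close>-th projection is a nonempty, finite,
  meet-closed subset of \<open>L\<close>; hence its meet \<open>\<sigma>\<^sub>i(y)\<close> lies in it.\<close>

lemma sigma_in_fibre:
  assumes i: "i \<in> {1..t}" and y: "y \<in> carrier (Ls i)"
  shows "sg i y \<in> L" and "sg i y i = y"
proof -
  interpret Li: lattice "Ls i" by (rule factor_lattice[OF i])
  interpret lattice P by (rule lattice_P)
  let ?S = "{x \<in> L. x i = y}"
  have "y \<in> (\<lambda>x. x i) ` L" using projection_onto[OF i] y by simp
  then have nonempty: "?S \<noteq> {}" by blast
  have yy: "y \<sqinter>\<^bsub>Ls i\<^esub> y = y" using Li.le_iff_join[OF y y] Li.le_refl[OF y] by simp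
  have "\<Sqinter>\<^bsub>P\<^esub> ?S \<in> ?S"
  proof (rule meet_closed_inf[OF _ nonempty])
    fix a b assume "a \<in> ?S" "b \<in> ?S"
    then show "a \<sqinter>\<^bsub>P\<^esub> b \<in> ?S" using meet_P[of a b] i yy meet_closed[of a b] by simp
  qed (use finite_L in auto)
  then show "sg i y \<in> L" "sg i y i = y" unfolding sigma_def by auto
qed

lemma sigma_le_iff:
  assumes i: "i \<in> {1..t}" and y: "y \<in> carrier (Ls i)" and x: "x \<in> L"
  shows "sg i y \<sqsubseteq>\<^bsub>P\<^esub> x \<longleftrightarrow> y \<sqsubseteq>\<^bsub>Ls i\<^esub> x i"
proof
  assume "sg i y \<sqsubseteq>\<^bsub>P\<^esub> x"
  then have "sg i y i \<sqsubseteq>\<^bsub>Ls i\<^esub> x i" using i unfolding le_P by blast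
  then show "y \<sqsubseteq>\<^bsub>Ls i\<^esub> x i" using sigma_in_fibre[OF i y] by simp
next
  assume yx: "y \<sqsubseteq>\<^bsub>Ls i\<^esub> x i"
  interpret Li: lattice "Ls i" by (rule factor_lattice[OF i])
  interpret lattice P by (rule lattice_P)
  let ?S = "{x \<in> L. x i = y}" and ?s = "sg i y"
  have s: "?s \<in> L" "?s i = y" using sigma_in_fibre[OF i y] by auto
  have xi: "x i \<in> carrier (Ls i)" using component_closed[OF x i] .
  let ?z = "x \<sqinter>\<^bsub>P\<^esub> ?s"
  have z: "?z \<in> L" using meet_closed[of x ?s] x s by simp
  have "?z i = x i \<sqinter>\<^bsub>Ls i\<^esub> y" using meet_P[OF x s(1)] i s(2) by simp
  also have "\<dots> = y" using Li.le_iff_join[OF y xi] yx meet_comm[of "Ls i" "x i"] by simp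
  finally have "?z \<in> ?S" using z by simp
  moreover have "greatest P (\<Sqinter>\<^bsub>P\<^esub> ?S) (Lower P ?S)"
    using finite_L \<open>?s \<in> L\<close> s(2) unfolding sigma_def by (intro finite_inf_greatest) auto
  ultimately have "?s \<sqsubseteq>\<^bsub>P\<^esub> ?z" unfolding sigma_def greatest_def Lower_def by auto
  moreover have "?z \<sqsubseteq>\<^bsub>P\<^esub> x" using meet_left[of x ?s] x s by simp
  ultimately show "?s \<sqsubseteq>\<^bsub>P\<^esub> x" using le_trans[of ?s ?z x] z x s by simp
qed

abbreviation G :: "(nat \<Rightarrow> 'a) set" where "G \<equiv> scaffolding t Ls L"
abbreviation eps :: "(nat \<Rightarrow> 'a) \<Rightarrow> (nat \<Rightarrow> 'a) set" where "eps \<equiv> epsilon t Ls L"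

lemma scaffolding_iff:
  "a \<in> G \<longleftrightarrow> (\<exists>i\<in>{1..t}. \<exists>y\<in>carrier (Ls i). y \<noteq> \<bottom>\<^bsub>Ls i\<^esub> \<and> a = sg i y)"
  unfolding scaffolding_def by blast

lemma scaffolding_subset: "G \<subseteq> L"
  using sigma_in_fibre(1) by (auto simp: scaffolding_def)

lemma epsilon_iff: "a \<in> eps x \<longleftrightarrow> a \<in> G \<and> a \<sqsubseteq>\<^bsub>P\<^esub> x"
  unfolding epsilon_def by blast

lemma sigma_of_component:
  assumes x: "x \<in> L" and i: "i \<in> {1..t}" and nz: "x i \<noteq> \<bottom>\<^bsub>Ls i\<^esub>"
  shows "sg i (x i) \<in> G" and "sg i (x i) \<sqsubseteq>\<^bsub>P\<^esub> x"
proof -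
  interpret Li: lattice "Ls i" by (rule factor_lattice[OF i])
  have xi: "x i \<in> carrier (Ls i)" by (rule component_closed[OF x i])
  show "sg i (x i) \<in> G" unfolding scaffolding_iff using i xi nz by blast
  show "sg i (x i) \<sqsubseteq>\<^bsub>P\<^esub> x" using sigma_le_iff[OF i xi x] Li.le_refl[OF xi] by simp
qed

text \<open>No scaffolding element lies below \<open>0\<close>, since scaffolding elements have a
  nonzero coordinate.\<close>

lemma epsilon_bottom: "eps \<bottom>\<^bsub>P\<^esub> = {}"
proof (rule ccontr)
  assume "eps \<bottom>\<^bsub>P\<^esub> \<noteq> {}"
  then obtain a where "a \<in> eps \<bottom>\<^bsub>P\<^esub>" by blast
  then obtain i y where i: "i \<in> {1..t}" and y: "y \<in> carrier (Ls i)" "y \<noteq> \<bottom>\<^bsub>Ls i\<^esub>"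
    and le: "sg i y \<sqsubseteq>\<^bsub>P\<^esub> \<bottom>\<^bsub>P\<^esub>"
    unfolding epsilon_iff scaffolding_iff by blast
  have "\<bottom>\<^bsub>P\<^esub> \<in> L" using least_closed[OF bottom_P] by simp
  then have "y \<sqsubseteq>\<^bsub>Ls i\<^esub> \<bottom>\<^bsub>Ls i\<^esub>" using sigma_le_iff[OF i y(1)] le bottom_P_component[OF i] by simp
  then show False using below_factor_bottom[OF i y(1)] y(2) by blast
qed

lemma epsilon_join_dense:
  assumes x: "x \<in> L" shows "least P x (Upper P (eps x))"
proof (rule least_UpperI)
  fix u assume u: "u \<in> Upper P (eps x)"
  then have uL: "u \<in> L" using Upper_closed[of P] by auto
  show "x \<sqsubseteq>\<^bsub>P\<^esub> u" unfolding le_P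
  proof
    fix i assume i: "i \<in> {1..t}"
    show "x i \<sqsubseteq>\<^bsub>Ls i\<^esub> u i"
    proof (cases "x i = \<bottom>\<^bsub>Ls i\<^esub>")
      case True
      then show ?thesis using factor_bottom[OF i] component_closed[OF uL i] by (simp add: least_def)
    next
      case False
      have xi: "x i \<in> carrier (Ls i)" by (rule component_closed[OF x i])
      have "sg i (x i) \<in> eps x" using sigma_of_component[OF x i False] epsilon_iff by blast
      then have "sg i (x i) \<sqsubseteq>\<^bsub>P\<^esub> u" using u scaffolding_subset by (auto simp: Upper_def epsilon_iff)
      then show ?thesis using sigma_le_iff[OF i xi uL] by simp
    qed
  qed
qed (use x scaffolding_subset in \<open>auto simp: epsilon_iff\<close>)

text \<open>By join-density, \<open>\<epsilon>\<close> is an order embedding.\<close>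

lemma epsilon_le_iff:
  assumes x: "x \<in> L" and y: "y \<in> L"
  shows "x \<sqsubseteq>\<^bsub>P\<^esub> y \<longleftrightarrow> eps x \<subseteq> eps y"
proof
  interpret partial_order P by (rule partial_order_P)
  assume xy: "x \<sqsubseteq>\<^bsub>P\<^esub> y"
  show "eps x \<subseteq> eps y"
  proof
    fix a assume "a \<in> eps x"
    then have a: "a \<in> G" "a \<sqsubseteq>\<^bsub>P\<^esub> x" unfolding epsilon_iff by auto
    then have "a \<sqsubseteq>\<^bsub>P\<^esub> y" using le_trans[OF a(2) xy] scaffolding_subset x y by auto
    then show "a \<in> eps y" using a(1) unfolding epsilon_iff by simp
  qed
next
  assume "eps x \<subseteq> eps y"
  then have "y \<in> Upper P (eps x)" using y by (auto simp: Upper_def epsilon_iff)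
  then show "x \<sqsubseteq>\<^bsub>P\<^esub> y" using least_le[OF epsilon_join_dense[OF x]] by blast
qed

text \<open>Each \<open>\<epsilon>(x)\<close> is a \<open>\<or>\<close>-ideal: it is a down-set of \<open>G(L)\<close>, and any join of
  its elements is below \<open>x\<close>.\<close>

lemma epsilon_vee_ideal:
  assumes x: "x \<in> L" shows "vee_ideal t Ls L (eps x)"
  unfolding vee_ideal_def
proof (intro conjI allI ballI impI)
  interpret partial_order P by (rule partial_order_P)
  show "eps x \<subseteq> G" unfolding epsilon_def by blast
  fix a b assume a: "a \<in> eps x" and b: "b \<in> G" and ba: "b \<sqsubseteq>\<^bsub>P\<^esub> a"
  have "a \<in> L" "b \<in> L" using a b scaffolding_subset by (auto simp: epsilon_iff)
  then have "b \<sqsubseteq>\<^bsub>P\<^esub> x" using le_trans[OF ba] a x by (simp add: epsilon_iff)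
  then show "b \<in> eps x" using b by (simp add: epsilon_iff)
next
  fix B assume B: "B \<subseteq> eps x" and g: "\<Squnion>\<^bsub>P\<^esub> B \<in> G"
  have "B \<subseteq> L" using B scaffolding_subset unfolding epsilon_def by auto
  moreover have "x \<in> Upper P B" using B x by (auto simp: Upper_def epsilon_iff)
  ultimately have "\<Squnion>\<^bsub>P\<^esub> B \<sqsubseteq>\<^bsub>P\<^esub> x" using least_le[OF sup_P] by blast
  then show "\<Squnion>\<^bsub>P\<^esub> B \<in> eps x" using g by (simp add: epsilon_iff)
qed

text \<open>Coordinates of joins: if every member of \<open>F\<close> has \<open>i\<close>-th coordinate below
  \<open>u\<close>, so does \<open>\<Squnion>F\<close>, because binary joins in \<open>L\<close> are componentwise.\<close>

lemma sup_component_le: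
  assumes F: "F \<subseteq> L" and i: "i \<in> {1..t}" and u: "u \<in> carrier (Ls i)"
    and below: "\<And>b. b \<in> F \<Longrightarrow> b i \<sqsubseteq>\<^bsub>Ls i\<^esub> u"
  shows "(\<Squnion>\<^bsub>P\<^esub> F) i \<sqsubseteq>\<^bsub>Ls i\<^esub> u"
proof (cases "F = {}")
  case True
  interpret partial_order P by (rule partial_order_P)
  have "\<Squnion>\<^bsub>P\<^esub> F = \<bottom>\<^bsub>P\<^esub>" using least_unique[OF sup_P[OF F]] bottom_P True by simp
  then show ?thesis using bottom_P_component[OF i] factor_bottom[OF i] u by (simp add: least_def)
next
  case False
  interpret Li: lattice "Ls i" by (rule factor_lattice[OF i])
  interpret lattice P by (rule lattice_P)
  let ?C = "{x \<in> L. x i \<sqsubseteq>\<^bsub>Ls i\<^esub> u}"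
  have "\<Squnion>\<^bsub>P\<^esub> F \<in> ?C"
  proof (rule join_closed_sup[OF _ False])
    fix x z assume x: "x \<in> ?C" and z: "z \<in> ?C"
    then have "(x \<squnion>\<^bsub>P\<^esub> z) i = x i \<squnion>\<^bsub>Ls i\<^esub> z i" using join_P i by simp
    also have "\<dots> \<sqsubseteq>\<^bsub>Ls i\<^esub> u" using x z u component_closed[OF _ i] by (auto intro: Li.join_le)
    finally show "x \<squnion>\<^bsub>P\<^esub> z \<in> ?C" using x z join_closed[of x z] by simp
  qed (use F below finite_subset[OF F finite_L] in auto)
  then show ?thesis by simp
qed

lemma vee_ideal_hereditary:
  "vee_ideal t Ls L A \<Longrightarrow> a \<in> A \<Longrightarrow> b \<in> G \<Longrightarrow> b \<sqsubseteq>\<^bsub>P\<^esub> a \<Longrightarrow> b \<in> A"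
  unfolding vee_ideal_def by blast

lemma vee_ideal_sup_closed:
  "vee_ideal t Ls L A \<Longrightarrow> B \<subseteq> A \<Longrightarrow> \<Squnion>\<^bsub>P\<^esub> B \<in> G \<Longrightarrow> \<Squnion>\<^bsub>P\<^esub> B \<in> A"
  unfolding vee_ideal_def by blast

lemma vee_ideal_subset: "vee_ideal t Ls L A \<Longrightarrow> A \<subseteq> L"
  using scaffolding_subset unfolding vee_ideal_def by blast

lemma sigma_sup_component:
  assumes AL: "A \<subseteq> L" and i: "i \<in> {1..t}"
  shows "sg i ((\<Squnion>\<^bsub>P\<^esub> A) i) = \<Squnion>\<^bsub>P\<^esub> ((\<lambda>b. sg i (b i)) ` {b \<in> A. b i \<noteq> \<bottom>\<^bsub>Ls i\<^esub>})"
    (is "?c = \<Squnion>\<^bsub>P\<^esub> ?B")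
proof -
  interpret lattice P by (rule lattice_P)
  let ?s = "\<Squnion>\<^bsub>P\<^esub> A" and ?d = "\<Squnion>\<^bsub>P\<^esub> ?B"
  have s: "least P ?s (Upper P A)" using sup_P[OF AL] .
  have sL: "?s \<in> L" using least_closed[OF s] by simp
  then have si: "?s i \<in> carrier (Ls i)" by (rule component_closed[OF _ i])
  have cL: "?c \<in> L" and ci: "?c i = ?s i" using sigma_in_fibre[OF i si] by auto
  have BL: "?B \<subseteq> L" using sigma_in_fibre(1)[OF i component_closed[OF _ i]] AL by blast
  have d: "least P ?d (Upper P ?B)" using sup_P[OF BL] .
  have dL: "?d \<in> L" using least_closed[OF d] by simp
  then have di: "?d i \<in> carrier (Ls i)" by (rule component_closed[OF _ i])
  have "?c \<in> Upper P ?B"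
  proof (rule Upper_memI)
    fix z assume "z \<in> ?B"
    then obtain b where b: "b \<in> A" and z: "z = sg i (b i)" by blast
    have bL: "b \<in> L" using b AL by blast
    have "b \<sqsubseteq>\<^bsub>P\<^esub> ?s" using least_Upper_above[OF s b] AL by simp
    then have "b i \<sqsubseteq>\<^bsub>Ls i\<^esub> ?s i" using i unfolding le_P by blast
    then have "b i \<sqsubseteq>\<^bsub>Ls i\<^esub> ?c i" using ci by simp
    then show "z \<sqsubseteq>\<^bsub>P\<^esub> ?c" using sigma_le_iff[OF i component_closed[OF bL i] cL] z by simp
  qed (use cL in simp)
  then have dc: "?d \<sqsubseteq>\<^bsub>P\<^esub> ?c" using least_le[OF d] by blast
  have "?s i \<sqsubseteq>\<^bsub>Ls i\<^esub> ?d i"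
  proof (rule sup_component_le[OF AL i di])
    fix b assume b: "b \<in> A"
    then have bL: "b \<in> L" using AL by blast
    show "b i \<sqsubseteq>\<^bsub>Ls i\<^esub> ?d i"
    proof (cases "b i = \<bottom>\<^bsub>Ls i\<^esub>")
      case True
      then show ?thesis using factor_bottom[OF i] di by (simp add: least_def)
    next
      case False
      then have "sg i (b i) \<sqsubseteq>\<^bsub>P\<^esub> ?d" using least_Upper_above[OF d] b BL by simp
      then show ?thesis using sigma_le_iff[OF i component_closed[OF bL i] dL] by simp
    qed
  qed
  then have "?c \<sqsubseteq>\<^bsub>P\<^esub> ?d" using sigma_le_iff[OF i si dL] by simp
  then show ?thesis using le_antisym[OF _ dc] dL cL by simp
qed

text \<open>The elements \<open>\<sigma>\<^sub>i(b\<^sub>i)\<close> lie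
  in \<open>A\<close> by heredity, and their join \<open>\<sigma>\<^sub>i(s\<^sub>i)\<close> lies in \<open>G(L)\<close>, hence in \<open>A\<close>.\<close>

lemma vee_ideal_contains_sigma_sup:
  assumes A: "vee_ideal t Ls L A" and i: "i \<in> {1..t}"
    and nz: "(\<Squnion>\<^bsub>P\<^esub> A) i \<noteq> \<bottom>\<^bsub>Ls i\<^esub>"
  shows "sg i ((\<Squnion>\<^bsub>P\<^esub> A) i) \<in> A"
proof -
  let ?B = "(\<lambda>b. sg i (b i)) ` {b \<in> A. b i \<noteq> \<bottom>\<^bsub>Ls i\<^esub>}"
  have AL: "A \<subseteq> L" using vee_ideal_subset[OF A] .
  have "?B \<subseteq> A"
    using vee_ideal_hereditary[OF A] sigma_of_component[OF _ i] AL by blast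
  moreover have "sg i ((\<Squnion>\<^bsub>P\<^esub> A) i) \<in> G"
    using sigma_of_component(1)[OF _ i, of "\<Squnion>\<^bsub>P\<^esub> A"] nz least_closed[OF sup_P[OF AL]] by simp
  ultimately show ?thesis
    using vee_ideal_sup_closed[OF A] sigma_sup_component[OF AL i] by simp
qed

text \<open>Every \<open>\<or>\<close>-ideal \<open>A\<close> is \<open>\<epsilon>(\<Squnion>A)\<close>: a scaffolding element \<open>\<sigma>\<^sub>i(y) \<le> \<Squnion>A\<close>
  lies below \<open>\<sigma>\<^sub>i((\<Squnion>A)\<^sub>i) \<in> A\<close>.\<close>

lemma epsilon_sup_vee_ideal:
  assumes A: "vee_ideal t Ls L A" shows "eps (\<Squnion>\<^bsub>P\<^esub> A) = A"
proof
  let ?s = "\<Squnion>\<^bsub>P\<^esub> A"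
  have AL: "A \<subseteq> L" using vee_ideal_subset[OF A] .
  have s: "least P ?s (Upper P A)" using sup_P[OF AL] .
  have sL: "?s \<in> L" using least_closed[OF s] by simp
  have "a \<sqsubseteq>\<^bsub>P\<^esub> ?s" if "a \<in> A" for a using least_Upper_above[OF s that] AL by simp
  then show "A \<subseteq> eps ?s" using A unfolding vee_ideal_def epsilon_def by blast
  show "eps ?s \<subseteq> A"
  proof
    fix a assume "a \<in> eps ?s"
    then obtain i y where i: "i \<in> {1..t}" and y: "y \<in> carrier (Ls i)" "y \<noteq> \<bottom>\<^bsub>Ls i\<^esub>"
      and a: "a = sg i y" and le: "sg i y \<sqsubseteq>\<^bsub>P\<^esub> ?s"
      unfolding epsilon_iff scaffolding_iff by blast
    have ys: "y \<sqsubseteq>\<^bsub>Ls i\<^esub> ?s i" using sigma_le_iff[OF i y(1) sL] le by simp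
    then have "?s i \<noteq> \<bottom>\<^bsub>Ls i\<^esub>" using below_factor_bottom[OF i y(1)] y(2) by auto
    then have top: "sg i (?s i) \<in> A" by (rule vee_ideal_contains_sigma_sup[OF A i])
    have "sg i (?s i) \<in> L" "sg i (?s i) i = ?s i"
      using sigma_in_fibre[OF i component_closed[OF sL i]] by auto
    then have "a \<sqsubseteq>\<^bsub>P\<^esub> sg i (?s i)" using a ys sigma_le_iff[OF i y(1)] by simp
    moreover have "a \<in> G" using a i y unfolding scaffolding_iff by blast
    ultimately show "a \<in> A" using vee_ideal_hereditary[OF A top] by blast
  qed
qed

end

theorem mainTheorem5:
  fixes t :: nat and Ls :: "nat \<Rightarrow> 'a gorder" and L :: "(nat \<Rightarrow> 'a) set"
  assumes "subdirect_product t Ls L"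
    and "finite L"
    and "\<forall>i\<in>{1..t}. finite (carrier (Ls i)) \<and> subdirectly_irreducible (Ls i)"
  shows "bij_betw (epsilon t Ls L) L {A. vee_ideal t Ls L A}
    \<and> (\<forall>x\<in>L. \<forall>y\<in>L. x \<sqsubseteq>\<^bsub>prod_ord t Ls L\<^esub> y \<longleftrightarrow> epsilon t Ls L x \<subseteq> epsilon t Ls L y)
    \<and> bij_betw (epsilon t Ls L) (L - {\<bottom>\<^bsub>prod_ord t Ls L\<^esub>}) {A. vee_ideal t Ls L A \<and> A \<noteq> {}}"
proof -
  interpret finite_subdirect_product t Ls L using assms(1,2) by unfold_locales
  interpret partial_order P by (rule partial_order_P)
  have inj: "inj_on eps L"
    using epsilon_le_iff le_antisym by (intro inj_onI) (metis carrier_P subset_refl)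
  have onto: "eps ` L = {A. vee_ideal t Ls L A}"
  proof (intro equalityI subsetI)
    fix A assume "A \<in> {A. vee_ideal t Ls L A}"
    then have A: "vee_ideal t Ls L A" by simp
    have "\<Squnion>\<^bsub>P\<^esub> A \<in> L" using least_closed[OF sup_P[OF vee_ideal_subset[OF A]]] by simp
    then show "A \<in> eps ` L" using epsilon_sup_vee_ideal[OF A] by force
  qed (use epsilon_vee_ideal in auto)
  have bij: "bij_betw eps L {A. vee_ideal t Ls L A}" using inj onto by (rule bij_betw_imageI)
  have bot: "\<bottom>\<^bsub>P\<^esub> \<in> L" using least_closed[OF bottom_P] by simp
  have "bij_betw eps (L - {\<bottom>\<^bsub>P\<^esub>}) ({A. vee_ideal t Ls L A} - {eps \<bottom>\<^bsub>P\<^esub>})"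
    using bij_betw_DiffI[OF bij, of "{\<bottom>\<^bsub>P\<^esub>}" "{eps \<bottom>\<^bsub>P\<^esub>}"] bot epsilon_vee_ideal[OF bot]
    by (simp add: bij_betw_def)
  then have "bij_betw eps (L - {\<bottom>\<^bsub>P\<^esub>}) {A. vee_ideal t Ls L A \<and> A \<noteq> {}}"
    by (simp add: epsilon_bottom set_diff_eq)
  then show ?thesis using bij epsilon_le_iff by blast
qed

end
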